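(* The cycle $C_5$ is $2$-adjustable, but $C_5$ admits no locally injective homomorphism to $\mathring{K}_3$.
   Context: $\mathring{K}_n$ denotes the complete graph on $n$ vertices with one loop added at a single vertex. A homomorphism $f:G\to H$ is a map $V(G)\to V(H)$ with $f(u)f(v)\in E(H)$ whenever $uv\in E(G)$; it is locally injective if for every vertex $v$, $f$ is injective on $N(v)$. An incidence of $G$ is a pair $(v,e)$ with $v\in e\in E(G)$; incidences $(v,e),(u,f)$ are adjacent if $v=u$, or $e=f$, or $vu\in\{e,f\}$; an incidence coloring gives adjacent incidences distinct colors. $S^0_c(v)=\{c(v,uv):uv\in E(G)\}$. An incidence coloring $c$ with palette $P$ is adjustable if there are two distinct colors $x,y\in P$ such that no vertex $v$ has $\{x,y\}\subseteq S^0_c(v)$. $G$ is $2$-adjustable if it admits an adjustable incidence coloring with palette of size $\Delta(G)+2$. *)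

theory Defs
  imports Main
begin

text \<open>Graphs are given by a vertex set V and an edge set E of vertex sets:
  an edge uv is the set {u,v}; a loop at v is the singleton {v}.\<close>

definition nbhd :: "'a set set \<Rightarrow> 'a \<Rightarrow> 'a set" where
  "nbhd E v = {u. {u, v} \<in> E}"

definition degree :: "'a set set \<Rightarrow> 'a \<Rightarrow> nat" where
  "degree E v = card {e \<in> E. v \<in> e}"

definition max_degree :: "'a set \<Rightarrow> 'a set set \<Rightarrow> nat" where
  "max_degree V E = Max (degree E ` V)"

definition graph_hom :: "'a set \<Rightarrow> 'a set set \<Rightarrow> 'b set \<Rightarrow> 'b set set \<Rightarrow> ('a \<Rightarrow> 'b) \<Rightarrow> bool" where
  "graph_hom VG EG VH EH f \<longleftrightarrow> f ` VG \<subseteq> VH \<and>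
     (\<forall>u\<in>VG. \<forall>v\<in>VG. {u, v} \<in> EG \<longrightarrow> {f u, f v} \<in> EH)"

definition locally_injective_hom ::
  "'a set \<Rightarrow> 'a set set \<Rightarrow> 'b set \<Rightarrow> 'b set set \<Rightarrow> ('a \<Rightarrow> 'b) \<Rightarrow> bool" where
  "locally_injective_hom VG EG VH EH f \<longleftrightarrow> graph_hom VG EG VH EH f \<and>
     (\<forall>v\<in>VG. inj_on f (nbhd EG v))"

definition looped_K_V :: "nat \<Rightarrow> nat set" where
  "looped_K_V n = {..<n}"

definition looped_K_E :: "nat \<Rightarrow> nat set set" where
  "looped_K_E n = {e. e \<subseteq> {..<n} \<and> card e = 2} \<union> {{0}}"

definition C5_V :: "nat set" where
  "C5_V = {..<5}"

definition C5_E :: "nat set set" where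
  "C5_E = {{i, (i + 1) mod 5} | i. i < 5}"

definition incidences :: "'a set set \<Rightarrow> ('a \<times> 'a set) set" where
  "incidences E = {(v, e). e \<in> E \<and> v \<in> e}"

definition inc_adjacent :: "'a \<times> 'a set \<Rightarrow> 'a \<times> 'a set \<Rightarrow> bool" where
  "inc_adjacent i j \<longleftrightarrow> (case i of (v, e) \<Rightarrow> case j of (u, f) \<Rightarrow>
      v = u \<or> e = f \<or> {v, u} = e \<or> {v, u} = f)"

definition incidence_coloring :: "'a set set \<Rightarrow> 'c set \<Rightarrow> ('a \<times> 'a set \<Rightarrow> 'c) \<Rightarrow> bool" where
  "incidence_coloring E P c \<longleftrightarrow>
     (\<forall>i\<in>incidences E. c i \<in> P) \<and>
     (\<forall>i\<in>incidences E. \<forall>j\<in>incidences E. i \<noteq> j \<and> inc_adjacent i j \<longrightarrow> c i \<noteq> c j)"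

definition S0 :: "'a set set \<Rightarrow> ('a \<times> 'a set \<Rightarrow> 'c) \<Rightarrow> 'a \<Rightarrow> 'c set" where
  "S0 E c v = {c (v, e) | e. e \<in> E \<and> v \<in> e}"

definition adjustable :: "'a set \<Rightarrow> 'a set set \<Rightarrow> 'c set \<Rightarrow> ('a \<times> 'a set \<Rightarrow> 'c) \<Rightarrow> bool" where
  "adjustable V E P c \<longleftrightarrow> incidence_coloring E P c \<and>
     (\<exists>x\<in>P. \<exists>y\<in>P. x \<noteq> y \<and> (\<forall>v\<in>V. \<not> {x, y} \<subseteq> S0 E c v))"

definition two_adjustable :: "'a set \<Rightarrow> 'a set set \<Rightarrow> bool" where
  "two_adjustable V E \<longleftrightarrow>
     (\<exists>(P :: nat set) c. finite P \<and> card P = max_degree V E + 2 \<and> adjustable V E P c)"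

end

theory Submission
  imports Defs
begin

text \<open>Colour the incidences of C_5 with 4 = \<Delta> + 2 colours so that colour 3 occurs only at
  vertex 4, where colour 0 is absent; then the pair 0, 3 witnesses adjustability.
  A locally injective homomorphism from C_5 to the looped K_3 is a closed walk v_0 \<dots> v_4 with
  v_(i-1) \<noteq> v_(i+1). At a vertex other than the looped one the step is forced (v_(i+1) is the
  third vertex besides v_(i-1), v_i), so a walk avoiding the loop is 3-periodic, impossible in
  length 5. If the walk uses the loop, v_i = v_(i+1) = 0, then v_(i-1), v_(i+2) are the two
  unlooped vertices and the fifth vertex must differ from both and from 0.\<close>

lemma looped_K_edge_iff:
  assumes "0 < n"
  shows "{a, b} \<in> looped_K_E n \<longleftrightarrow> a < n \<and> b < n \<and> (a \<noteq> b \<or> a = 0 \<and> b = 0)"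
  using assms unfolding looped_K_E_def by (auto simp: card_insert_if doubleton_eq_iff)

lemma S0_eq_image: "S0 E c v = (\<lambda>e. c (v, e)) ` {e \<in> E. v \<in> e}"
  unfolding S0_def by auto

lemma inc_adjacent_arcs:
  assumes "v \<noteq> w" "u \<noteq> x"
  shows "inc_adjacent (v, {v, w}) (u, {u, x}) \<longleftrightarrow> v = u \<or> u = w \<or> v = x"
  using assms unfolding inc_adjacent_def by (auto simp: doubleton_eq_iff)

definition arcs :: "'a set set \<Rightarrow> ('a \<times> 'a) set" where
  "arcs E = {(v, w). {v, w} \<in> E \<and> v \<noteq> w}"

lemma incidences_eq_arcs:
  assumes "\<forall>e\<in>E. card e = 2"
  shows "incidences E = (\<lambda>(v, w). (v, {v, w})) ` arcs E"
proof (intro equalityI subsetI)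
  fix i assume "i \<in> incidences E"
  then obtain v e where i: "i = (v, e)" "e \<in> E" "v \<in> e" unfolding incidences_def by auto
  moreover obtain x y where "e = {x, y}" "x \<noteq> y" using i(2) assms card_2_iff by metis
  ultimately obtain w where "e = {v, w}" "v \<noteq> w" by blast
  then show "i \<in> (\<lambda>(v, w). (v, {v, w})) ` arcs E" using i unfolding arcs_def by auto
qed (auto simp: incidences_def arcs_def)

lemma incidence_coloring_arcsI:
  assumes "\<forall>e\<in>E. card e = 2"
    and "\<And>v w. (v, w) \<in> arcs E \<Longrightarrow> c (v, {v, w}) \<in> P"
    and "\<And>v w u x. (v, w) \<in> arcs E \<Longrightarrow> (u, x) \<in> arcs E \<Longrightarrow> (v, w) \<noteq> (u, x) \<Longrightarrow>
           v = u \<or> u = w \<or> v = x \<Longrightarrow> c (v, {v, w}) \<noteq> c (u, {u, x})"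
  shows "incidence_coloring E P c"
  unfolding incidence_coloring_def incidences_eq_arcs[OF assms(1)]
proof (intro conjI ballI impI)
  fix i j
  assume "i \<in> (\<lambda>(v, w). (v, {v, w})) ` arcs E" "j \<in> (\<lambda>(v, w). (v, {v, w})) ` arcs E"
    and ij: "i \<noteq> j \<and> inc_adjacent i j"
  then obtain v w u x where arcs: "(v, w) \<in> arcs E" "(u, x) \<in> arcs E"
    and i: "i = (v, {v, w})" and j: "j = (u, {u, x})" by auto
  have "v \<noteq> w" "u \<noteq> x" using arcs unfolding arcs_def by auto
  then have "v = u \<or> u = w \<or> v = x" using ij i j inc_adjacent_arcs[of v w u x] by simp
  moreover have "(v, w) \<noteq> (u, x)" using ij i j by auto
  ultimately show "c i \<noteq> c j" using assms(3)[OF arcs] i j by simp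
qed (use assms(2) in auto)

lemma C5_V_eq: "C5_V = {0, 1, 2, 3, 4}"
  unfolding C5_V_def by auto

lemma C5_E_eq: "C5_E = {{0, 1}, {1, 2}, {2, 3}, {3, 4}, {4, 0 :: nat}}"
proof -
  have "C5_E = (\<lambda>i. {i, (i + 1) mod 5}) ` {..<5}" unfolding C5_E_def by auto
  also have "{..<5 :: nat} = {0, 1, 2, 3, 4}" by auto
  finally show ?thesis
    by (simp only: image_insert image_empty) (simp add: insert_commute numeral_2_eq_2)
qed

lemma C5_edge_card: "\<forall>e\<in>C5_E. card e = 2"
  unfolding C5_E_eq by simp

lemma C5_arcs_eq:
  "arcs C5_E = {(0, 1), (1, 2), (2, 3), (3, 4), (4, 0),
                (1, 0), (2, 1), (3, 2), (4, 3), (0, 4)}"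
  unfolding arcs_def C5_E_eq by (auto simp: doubleton_eq_iff)

lemma C5_incident_edges:
  "{e \<in> C5_E. 0 \<in> e} = {{0, 1}, {0, 4}}"
  "{e \<in> C5_E. 1 \<in> e} = {{1, 0}, {1, 2}}"
  "{e \<in> C5_E. 2 \<in> e} = {{2, 1}, {2, 3}}"
  "{e \<in> C5_E. 3 \<in> e} = {{3, 2}, {3, 4}}"
  "{e \<in> C5_E. 4 \<in> e} = {{4, 3}, {4, 0}}"
  unfolding C5_E_eq by (auto simp: insert_commute)

lemma C5_degree: "v \<in> C5_V \<Longrightarrow> degree C5_E v = 2"
  unfolding C5_V_eq degree_def
  by (elim insertE emptyE) (simp_all add: C5_incident_edges[simplified] doubleton_eq_iff)

lemma C5_max_degree: "max_degree C5_V C5_E = 2"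
proof -
  have "degree C5_E ` C5_V = {2}" using C5_degree by (auto simp: C5_V_eq)
  then show ?thesis unfolding max_degree_def by simp
qed

lemma C5_nbhd_eq:
  "nbhd C5_E 0 = {1, 4}" "nbhd C5_E 1 = {2, 0}" "nbhd C5_E 2 = {3, 1}"
  "nbhd C5_E 3 = {4, 2}" "nbhd C5_E 4 = {0, 3}"
  unfolding nbhd_def C5_E_eq by (auto simp: doubleton_eq_iff)

definition C5_incidence_colour :: "nat \<times> nat set \<Rightarrow> nat" where
  "C5_incidence_colour = (\<lambda>(v, e).
     if the_elem (e - {v}) = Suc v mod 5 then [0, 2, 1, 0, 3] ! v else [2, 1, 0, 2, 1] ! v)"

lemma C5_incidence_colour_arc:
  "v \<noteq> w \<Longrightarrow> C5_incidence_colour (v, {v, w}) =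
     (if w = Suc v mod 5 then [0, 2, 1, 0, 3] ! v else [2, 1, 0, 2, 1] ! v)"
  unfolding C5_incidence_colour_def by (simp add: insert_Diff_if)

lemma C5_incidence_coloring: "incidence_coloring C5_E {0, 1, 2, 3} C5_incidence_colour"
proof (rule incidence_coloring_arcsI[OF C5_edge_card])
  fix v w assume "(v, w) \<in> arcs C5_E"
  then show "C5_incidence_colour (v, {v, w}) \<in> {0, 1, 2, 3}"
    unfolding C5_arcs_eq by (elim insertE emptyE) (simp_all add: C5_incidence_colour_arc)
next
  fix v w u x assume "(v, w) \<in> arcs C5_E" "(u, x) \<in> arcs C5_E"
    and "(v, w) \<noteq> (u, x)" "v = u \<or> u = w \<or> v = x"
  moreover have "\<forall>(v, w)\<in>arcs C5_E. \<forall>(u, x)\<in>arcs C5_E. (v, w) \<noteq> (u, x) \<and> (v = u \<or> u = w \<or> v = x)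
      \<longrightarrow> C5_incidence_colour (v, {v, w}) \<noteq> C5_incidence_colour (u, {u, x})"
    unfolding C5_arcs_eq by (simp add: C5_incidence_colour_arc)
  ultimately show "C5_incidence_colour (v, {v, w}) \<noteq> C5_incidence_colour (u, {u, x})"
    by fast
qed

lemma C5_two_adjustable: "two_adjustable C5_V C5_E"
  unfolding two_adjustable_def
proof (intro exI conjI)
  show "finite {0, 1, 2, 3 :: nat}" by simp
  show "card {0, 1, 2, 3 :: nat} = max_degree C5_V C5_E + 2" by (simp add: C5_max_degree)
  have "\<forall>v\<in>C5_V. \<not> {0, 3} \<subseteq> S0 C5_E C5_incidence_colour v"
    by (simp add: C5_V_eq S0_eq_image C5_incident_edges[simplified] C5_incidence_colour_arc)
  then show "adjustable C5_V C5_E {0, 1, 2, 3} C5_incidence_colour"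
    unfolding adjustable_def using C5_incidence_coloring by auto
qed

lemma no_nonbacktracking_closed_5_walk_looped_K3:
  assumes "{v0, v1} \<in> looped_K_E 3" "{v1, v2} \<in> looped_K_E 3" "{v2, v3} \<in> looped_K_E 3"
    "{v3, v4} \<in> looped_K_E 3" "{v4, v0} \<in> looped_K_E 3"
    and "v0 \<noteq> v2" "v1 \<noteq> v3" "v2 \<noteq> v4" "v3 \<noteq> v0" "v4 \<noteq> v1"
  shows False
proof -
  have "v0 \<in> {0, 1, 2}" "v1 \<in> {0, 1, 2}" "v2 \<in> {0, 1, 2}" "v3 \<in> {0, 1, 2}" "v4 \<in> {0, 1, 2}"
    using assms(1-5) by (auto simp: looped_K_edge_iff)
  moreover have "v0 \<noteq> v1 \<or> v0 = 0 \<and> v1 = 0" "v1 \<noteq> v2 \<or> v1 = 0 \<and> v2 = 0"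
    "v2 \<noteq> v3 \<or> v2 = 0 \<and> v3 = 0" "v3 \<noteq> v4 \<or> v3 = 0 \<and> v4 = 0" "v4 \<noteq> v0 \<or> v4 = 0 \<and> v0 = 0"
    using assms(1-5) by (simp_all add: looped_K_edge_iff)
  ultimately show False using assms(6-10) by auto
qed

lemma C5_no_locally_injective_hom_looped_K3:
  "\<not> (\<exists>f. locally_injective_hom C5_V C5_E (looped_K_V 3) (looped_K_E 3) f)"
proof
  assume "\<exists>f. locally_injective_hom C5_V C5_E (looped_K_V 3) (looped_K_E 3) f"
  then obtain f where hom: "graph_hom C5_V C5_E (looped_K_V 3) (looped_K_E 3) f"
    and inj: "\<forall>v\<in>C5_V. inj_on f (nbhd C5_E v)"
    unfolding locally_injective_hom_def by blast
  have edges: "\<forall>u\<in>C5_V. \<forall>v\<in>C5_V. {u, v} \<in> C5_E \<longrightarrow> {f u, f v} \<in> looped_K_E 3"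
    using hom unfolding graph_hom_def by blast
  have "inj_on f (nbhd C5_E 0)" "inj_on f (nbhd C5_E 1)" "inj_on f (nbhd C5_E 2)"
    "inj_on f (nbhd C5_E 3)" "inj_on f (nbhd C5_E 4)"
    using inj unfolding C5_V_eq by blast+
  then have "f 1 \<noteq> f 4" "f 2 \<noteq> f 0" "f 3 \<noteq> f 1" "f 4 \<noteq> f 2" "f 0 \<noteq> f 3"
    unfolding C5_nbhd_eq by auto
  then show False
    using edges no_nonbacktracking_closed_5_walk_looped_K3[of "f 0" "f 1" "f 2" "f 3" "f 4"]
    unfolding C5_V_eq C5_E_eq by simp
qed

theorem mainTheorem11:
  shows "two_adjustable C5_V C5_E \<and>
    \<not> (\<exists>f. locally_injective_hom C5_V C5_E (looped_K_V 3) (looped_K_E 3) f)"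
  using C5_two_adjustable C5_no_locally_injective_hom_looped_K3 by blast

end
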